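(* Let $b,q,\lambda^i,\mu^i,\gamma^i$ ($i=1,\dots,n$) be smooth functions of $R^1,\dots,R^n$ with all $\mu^i$ nowhere zero, such that $q_i=\frac{\lambda^i}{\mu^i}b_i$ for all $i$ and, for all $i\ne j$, with $E_{ij}:=q(\mu^j-\mu^i)+b(\lambda^i-\lambda^j)+\gamma^i-\gamma^j$ nowhere zero and $K_{ij}:=\frac{\lambda^i-\lambda^j\mu^i/\mu^j}{E_{ij}}b_j$, $$\lambda^i_j=(\lambda^j-\lambda^i)K_{ij},\quad \mu^i_j=(\mu^j-\mu^i)K_{ij},\quad \gamma^i_j=(\gamma^j-\gamma^i)K_{ij},\quad b_{ij}=\frac{\lambda^i(1+\mu^j/\mu^i)-\lambda^j(1+\mu^i/\mu^j)}{E_{ij}}b_ib_j.$$ Then the functions $c^i:=\gamma^i+b\lambda^i-q\mu^i$ satisfy $\partial c^i/\partial R^j=0$ for $j\ne i$ and $E_{ij}=c^i-c^j$; locally there is a function $u$ with $u_i=\mu^ib_i$; and with $\phi^i:=\lambda^i/\mu^i$ one has, for all $i\ne j$, $$\phi^i_j=\frac{(\phi^j-\phi^i)^2}{c^j-c^i}u_j,\qquad u_{ij}=2\frac{\phi^j-\phi^i}{c^j-c^i}u_iu_j.$$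
   Context: Lower indices denote partial derivatives with respect to $R^1,\dots,R^n$. (This is the Gibbons-Tsarev system for hydrodynamic reductions of $\theta_{t\tilde t}+\theta_{z\tilde z}+\theta_{tx}\theta_{zy}-\theta_{ty}\theta_{zx}=0$ with $b=\theta_{zy}$, $q=\theta_{zx}$.) *)

theory Defs
  imports "HOL-Analysis.Analysis"
begin

text \<open>Points of the domain are R = (R^1,...,R^n), modelled as vectors in real^'n
  (the index type 'n is an arbitrary finite type with n = CARD('n) elements).\<close>

definition partial :: "(real^'n \<Rightarrow> real) \<Rightarrow> 'n \<Rightarrow> real^'n \<Rightarrow> real" where
  "partial f i x = deriv (\<lambda>t. f (x + t *\<^sub>R axis i 1)) 0"

fun iter_partial :: "'n list \<Rightarrow> (real^'n \<Rightarrow> real) \<Rightarrow> real^'n \<Rightarrow> real" where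
  "iter_partial [] f = f"
| "iter_partial (i # is) f = partial (iter_partial is f) i"

definition smooth_on :: "(real^'n) set \<Rightarrow> (real^'n \<Rightarrow> real) \<Rightarrow> bool" where
  "smooth_on U f \<longleftrightarrow> (\<forall>is. iter_partial is f differentiable_on U)"

definition Ecoef :: "(real^'n \<Rightarrow> real) \<Rightarrow> (real^'n \<Rightarrow> real) \<Rightarrow> ('n \<Rightarrow> real^'n \<Rightarrow> real)
    \<Rightarrow> ('n \<Rightarrow> real^'n \<Rightarrow> real) \<Rightarrow> ('n \<Rightarrow> real^'n \<Rightarrow> real) \<Rightarrow> 'n \<Rightarrow> 'n \<Rightarrow> real^'n \<Rightarrow> real" where
  "Ecoef b q lam mu gam i j x =
     q x * (mu j x - mu i x) + b x * (lam i x - lam j x) + gam i x - gam j x"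

definition Kcoef :: "(real^'n \<Rightarrow> real) \<Rightarrow> (real^'n \<Rightarrow> real) \<Rightarrow> ('n \<Rightarrow> real^'n \<Rightarrow> real)
    \<Rightarrow> ('n \<Rightarrow> real^'n \<Rightarrow> real) \<Rightarrow> ('n \<Rightarrow> real^'n \<Rightarrow> real) \<Rightarrow> 'n \<Rightarrow> 'n \<Rightarrow> real^'n \<Rightarrow> real" where
  "Kcoef b q lam mu gam i j x =
     (lam i x - lam j x * mu i x / mu j x) / Ecoef b q lam mu gam i j x * partial b j x"

end

theory Submission
  imports Defs
begin

text \<open>The c^i are Riemann invariants: substituting the system into the derivative of c^i along
  R^j leaves (lam^i - lam^j mu^i / mu^j) b_j - K_ij E_ij, which vanishes by the definition of K_ij,
  while E_ij = c^i - c^j is an identity. The one-form sum_i mu^i b_i dR^i is closed, since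
  (mu^i b_i)_j = 2 mu^i mu^j (phi^i - phi^j) b_i b_j / E_ij is symmetric in i and j; on a ball it
  is exact, a potential u being obtained by integrating the form along rays from the centre.\<close>

section \<open>Partial derivatives\<close>

lemma partial_eq_derivative_axis:
  fixes f :: "real^'n \<Rightarrow> real"
  assumes "(f has_derivative f') (at y)"
  shows "partial f i y = f' (axis i 1)"
proof -
  have "((\<lambda>t. y + t *\<^sub>R axis i 1) has_derivative (\<lambda>s. s *\<^sub>R axis i 1)) (at 0)"
    by (auto intro!: derivative_eq_intros)
  from has_derivative_compose[OF this, of f f'] assms
  have "((\<lambda>t. f (y + t *\<^sub>R axis i 1)) has_derivative (\<lambda>s. f' (s *\<^sub>R axis i 1))) (at 0)"
    by (simp add: o_def)
  moreover have "(\<lambda>s. f' (s *\<^sub>R axis i 1)) = (*) (f' (axis i 1))"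
    using has_derivative_linear[OF assms] by (auto simp add: linear_scale)
  ultimately have "((\<lambda>t. f (y + t *\<^sub>R axis i 1)) has_field_derivative f' (axis i 1)) (at 0)"
    by (simp add: has_field_derivative_def)
  then show ?thesis unfolding partial_def by (rule DERIV_imp_deriv)
qed

lemma sum_mult_axis_nth: "(\<Sum>k\<in>UNIV. c k * axis j (1::real) $ k) = (c j :: real)"
  by (simp add: axis_def if_distrib sum.delta cong: if_cong)

lemma linear_eq_sum_axis:
  fixes f' :: "real^'n \<Rightarrow> real"
  assumes "linear f'"
  shows "f' h = (\<Sum>j\<in>UNIV. f' (axis j 1) * h $ j)"
proof -
  have "f' h = f' (\<Sum>j\<in>UNIV. h $ j *\<^sub>R axis j 1)"
    using basis_expansion[of h] by (simp add: scalar_mult_eq_scaleR)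
  also have "\<dots> = (\<Sum>j\<in>UNIV. h $ j * f' (axis j 1))"
    using assms by (simp add: linear_sum linear_scale)
  finally show ?thesis by (simp add: mult.commute)
qed

lemma has_derivative_sum_partials:
  fixes f :: "real^'n \<Rightarrow> real"
  assumes "f differentiable (at y)"
  shows "(f has_derivative (\<lambda>h. \<Sum>j\<in>UNIV. partial f j y * h $ j)) (at y)"
proof -
  obtain f' where f': "(f has_derivative f') (at y)" using assms differentiable_def by blast
  have "f' = (\<lambda>h. \<Sum>j\<in>UNIV. partial f j y * h $ j)"
  proof
    fix h
    show "f' h = (\<Sum>j\<in>UNIV. partial f j y * h $ j)"
      by (subst linear_eq_sum_axis[OF has_derivative_linear[OF f']])
        (simp add: partial_eq_derivative_axis[OF f'])
  qed
  with f' show ?thesis by simp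
qed

lemma partial_cong_open:
  fixes f g :: "real^'n \<Rightarrow> real"
  assumes "open V" "y \<in> V" "\<And>z. z \<in> V \<Longrightarrow> f z = g z"
  shows "partial f i y = partial g i y"
proof -
  obtain e where e: "e > 0" "ball y e \<subseteq> V"
    using assms(1,2) open_contains_ball by blast
  have "\<forall>\<^sub>F t in nhds 0. f (y + t *\<^sub>R axis i 1) = g (y + t *\<^sub>R axis i 1)"
    unfolding eventually_nhds_metric
  proof (intro exI[of _ e] conjI allI impI)
    fix t :: real
    assume "dist t 0 < e"
    then have "y + t *\<^sub>R axis i 1 \<in> V" using e(2) by (auto simp: dist_norm)
    then show "f (y + t *\<^sub>R axis i 1) = g (y + t *\<^sub>R axis i 1)" using assms(3) by blast
  qed (rule e(1))
  then show ?thesis unfolding partial_def by (rule deriv_cong_ev) simp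
qed

lemma partial_add:
  fixes f g :: "real^'n \<Rightarrow> real"
  assumes "f differentiable (at y)" "g differentiable (at y)"
  shows "partial (\<lambda>x. f x + g x) i y = partial f i y + partial g i y"
  using partial_eq_derivative_axis[OF has_derivative_add[OF assms[THEN has_derivative_sum_partials]]]
  by (simp add: sum_mult_axis_nth)

lemma partial_mult:
  fixes f g :: "real^'n \<Rightarrow> real"
  assumes "f differentiable (at y)" "g differentiable (at y)"
  shows "partial (\<lambda>x. f x * g x) i y = partial f i y * g y + f y * partial g i y"
  using partial_eq_derivative_axis[OF has_derivative_mult[OF assms[THEN has_derivative_sum_partials]]]
  by (simp add: sum_mult_axis_nth)

lemma partial_divide:
  fixes f g :: "real^'n \<Rightarrow> real"
  assumes "f differentiable (at y)" "g differentiable (at y)" "g y \<noteq> 0"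
  shows "partial (\<lambda>x. f x / g x) i y = (partial f i y * g y - f y * partial g i y) / (g y)^2"
  using partial_eq_derivative_axis[OF has_derivative_divide[OF assms(1,2)[THEN has_derivative_sum_partials] assms(3)]]
    assms(3)
  by (simp add: sum_mult_axis_nth field_simps power2_eq_square)

section \<open>Smooth functions\<close>

lemma iter_partial_append_single: "iter_partial (is @ [i]) f = iter_partial is (partial f i)"
  by (induction "is") auto

lemma iter_partial_cong_open:
  assumes "open V" "\<And>z. z \<in> V \<Longrightarrow> f z = g z" "z \<in> V"
  shows "iter_partial is f z = iter_partial is g z"
  using assms(3)
proof (induction "is" arbitrary: z)
  case (Cons i js)
  show ?case using partial_cong_open[OF assms(1) Cons.prems Cons.IH] by simp
qed (use assms(2) in simp)

lemma differentiable_on_cong_open: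
  fixes f g :: "real^'n \<Rightarrow> real"
  assumes "open V" "f differentiable_on V" "\<And>z. z \<in> V \<Longrightarrow> f z = g z"
  shows "g differentiable_on V"
  unfolding differentiable_on_eq_differentiable_at[OF assms(1)]
proof
  fix x assume x: "x \<in> V"
  then obtain f' where "(f has_derivative f') (at x)"
    using assms(1,2) differentiable_on_eq_differentiable_at differentiable_def by blast
  then have "(g has_derivative f') (at x)"
    by (rule has_derivative_transform_within_open[OF _ assms(1) x]) (use assms(3) in auto)
  then show "g differentiable at x" using differentiable_def by blast
qed

lemma smooth_on_subset: "smooth_on U f \<Longrightarrow> V \<subseteq> U \<Longrightarrow> smooth_on V f"
  unfolding smooth_on_def using differentiable_on_subset by blast

lemma smooth_on_imp_differentiable_on: "smooth_on U f \<Longrightarrow> f differentiable_on U"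
  unfolding smooth_on_def by (metis iter_partial.simps(1))

lemma smooth_on_imp_differentiable_at:
  "smooth_on U f \<Longrightarrow> open U \<Longrightarrow> x \<in> U \<Longrightarrow> f differentiable (at x)"
  by (metis smooth_on_imp_differentiable_on differentiable_on_eq_differentiable_at)

lemma smooth_on_partial: "smooth_on V f \<Longrightarrow> smooth_on V (partial f i)"
  unfolding smooth_on_def by (metis iter_partial_append_single)

lemma smooth_on_if_partials_smooth:
  assumes "f differentiable_on V" "\<And>i. smooth_on V (partial f i)"
  shows "smooth_on V f"
  unfolding smooth_on_def
proof
  fix "is"
  show "iter_partial is f differentiable_on V"
    using assms unfolding smooth_on_def
    by (cases "is" rule: rev_exhaust) (simp_all add: iter_partial_append_single)
qed

text \<open>Smoothness of products is proved by induction on the order of differentiability.\<close>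

definition smooth_upto_on :: "nat \<Rightarrow> (real^'n) set \<Rightarrow> (real^'n \<Rightarrow> real) \<Rightarrow> bool" where
  "smooth_upto_on k V f \<longleftrightarrow> (\<forall>is. length is \<le> k \<longrightarrow> iter_partial is f differentiable_on V)"

lemma smooth_on_iff_smooth_upto_on: "smooth_on V f \<longleftrightarrow> (\<forall>k. smooth_upto_on k V f)"
  unfolding smooth_on_def smooth_upto_on_def by auto

lemma smooth_upto_on_cong_open:
  fixes f g :: "real^'n \<Rightarrow> real"
  assumes "open V" "smooth_upto_on k V f" "\<And>z. z \<in> V \<Longrightarrow> f z = g z"
  shows "smooth_upto_on k V g"
  unfolding smooth_upto_on_def
proof (intro allI impI)
  fix "is" :: "'n list"
  assume "length is \<le> k"
  then have "iter_partial is f differentiable_on V"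
    using assms(2) by (simp add: smooth_upto_on_def)
  then show "iter_partial is g differentiable_on V"
    by (rule differentiable_on_cong_open[OF assms(1)])
      (rule iter_partial_cong_open[OF assms(1)], use assms(3) in auto)
qed

lemma smooth_on_cong_open:
  "open V \<Longrightarrow> smooth_on V f \<Longrightarrow> (\<And>z. z \<in> V \<Longrightarrow> f z = g z) \<Longrightarrow> smooth_on V g"
  unfolding smooth_on_iff_smooth_upto_on by (blast intro: smooth_upto_on_cong_open)

lemma smooth_upto_on_Suc_iff:
  fixes f :: "real^'n \<Rightarrow> real"
  shows "smooth_upto_on (Suc k) V f \<longleftrightarrow> f differentiable_on V \<and> (\<forall>i. smooth_upto_on k V (partial f i))"
proof
  assume *: "smooth_upto_on (Suc k) V f"
  have "iter_partial is (partial f i) differentiable_on V" if "length is \<le> k" for "is" i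
    using *[unfolded smooth_upto_on_def, rule_format, of "is @ [i]"] that
    by (simp add: iter_partial_append_single)
  moreover have "f differentiable_on V"
    using *[unfolded smooth_upto_on_def, rule_format, of "[]"] by simp
  ultimately show "f differentiable_on V \<and> (\<forall>i. smooth_upto_on k V (partial f i))"
    unfolding smooth_upto_on_def by blast
next
  assume *: "f differentiable_on V \<and> (\<forall>i. smooth_upto_on k V (partial f i))"
  show "smooth_upto_on (Suc k) V f"
    unfolding smooth_upto_on_def
  proof (intro allI impI)
    fix "is" :: "'n list"
    assume "length is \<le> Suc k"
    then show "iter_partial is f differentiable_on V"
      using * unfolding smooth_upto_on_def
      by (cases "is" rule: rev_exhaust) (auto simp: iter_partial_append_single)
  qed
qed

lemma smooth_upto_on_Suc_imp: "smooth_upto_on (Suc k) V f \<Longrightarrow> smooth_upto_on k V f"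
  unfolding smooth_upto_on_def by auto

lemma iter_partial_add:
  fixes f g :: "real^'n \<Rightarrow> real"
  assumes "open V" "smooth_upto_on k V f" "smooth_upto_on k V g" "length js \<le> k" "z \<in> V"
  shows "iter_partial js (\<lambda>x. f x + g x) z = iter_partial js f z + iter_partial js g z"
  using assms(4,5)
proof (induction js arbitrary: z)
  case (Cons i js)
  have js: "length js \<le> k" using Cons.prems(1) by simp
  have "iter_partial (i # js) (\<lambda>x. f x + g x) z = partial (iter_partial js (\<lambda>x. f x + g x)) i z"
    by simp
  also have "\<dots> = partial (\<lambda>x. iter_partial js f x + iter_partial js g x) i z"
    by (rule partial_cong_open[OF assms(1) Cons.prems(2)]) (rule Cons.IH[OF js])
  also have "\<dots> = iter_partial (i # js) f z + iter_partial (i # js) g z"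
  proof -
    have "iter_partial js f differentiable_on V" "iter_partial js g differentiable_on V"
      using assms(2,3) js by (simp_all add: smooth_upto_on_def)
    then show ?thesis
      using Cons.prems(2) assms(1) by (simp add: partial_add differentiable_on_eq_differentiable_at)
  qed
  finally show ?case .
qed simp

lemma smooth_upto_on_add:
  fixes f g :: "real^'n \<Rightarrow> real"
  assumes "open V" "smooth_upto_on k V f" "smooth_upto_on k V g"
  shows "smooth_upto_on k V (\<lambda>x. f x + g x)"
  unfolding smooth_upto_on_def
proof (intro allI impI)
  fix js :: "'n list"
  assume js: "length js \<le> k"
  have "(\<lambda>x. iter_partial js f x + iter_partial js g x) differentiable_on V"
    using assms(2,3) js unfolding smooth_upto_on_def by (intro differentiable_on_add) auto
  then show "iter_partial js (\<lambda>x. f x + g x) differentiable_on V"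
    by (rule differentiable_on_cong_open[OF assms(1)]) (simp add: iter_partial_add[OF assms js])
qed

lemma smooth_upto_on_mult:
  fixes f g :: "real^'n \<Rightarrow> real"
  assumes "open V" "smooth_upto_on k V f" "smooth_upto_on k V g"
  shows "smooth_upto_on k V (\<lambda>x. f x * g x)"
  using assms(2,3)
proof (induction k arbitrary: f g)
  case 0
  then show ?case
    using assms(1) by (auto simp: smooth_upto_on_def intro: differentiable_on_mult)
next
  case (Suc k)
  have "smooth_upto_on k V (partial (\<lambda>x. f x * g x) i)" for i
  proof -
    have f: "f differentiable_on V" "smooth_upto_on k V f" "smooth_upto_on k V (partial f i)"
      and g: "g differentiable_on V" "smooth_upto_on k V g" "smooth_upto_on k V (partial g i)"
      using Suc.prems[unfolded smooth_upto_on_Suc_iff] Suc.prems[THEN smooth_upto_on_Suc_imp]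
      by auto
    have "smooth_upto_on k V (\<lambda>x. partial f i x * g x + f x * partial g i x)"
      using smooth_upto_on_add[OF assms(1) Suc.IH[OF f(3) g(2)] Suc.IH[OF f(2) g(3)]] .
    moreover have "partial f i z * g z + f z * partial g i z = partial (\<lambda>x. f x * g x) i z"
      if "z \<in> V" for z
      using f(1) g(1) that assms(1)
      by (simp add: partial_mult differentiable_on_eq_differentiable_at)
    ultimately show ?thesis
      by (rule smooth_upto_on_cong_open[OF assms(1)]) simp
  qed
  moreover have "(\<lambda>x. f x * g x) differentiable_on V"
    using Suc.prems[unfolded smooth_upto_on_Suc_iff] by (blast intro: differentiable_on_mult)
  ultimately show ?case by (simp add: smooth_upto_on_Suc_iff)
qed

lemma smooth_on_mult:
  "open V \<Longrightarrow> smooth_on V f \<Longrightarrow> smooth_on V g \<Longrightarrow> smooth_on V (\<lambda>x. f x * g x)"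
  unfolding smooth_on_iff_smooth_upto_on by (blast intro: smooth_upto_on_mult)

section \<open>Potentials of closed one-forms on balls\<close>

lemma leibniz_rule_partials:
  fixes f :: "real^'n \<Rightarrow> real \<Rightarrow> real" and F :: "'n \<Rightarrow> real^'n \<Rightarrow> real \<Rightarrow> real"
  assumes deriv: "\<And>x t. x \<in> V \<Longrightarrow> t \<in> cbox a b \<Longrightarrow>
      ((\<lambda>x. f x t) has_derivative (\<lambda>h. \<Sum>j\<in>UNIV. F j x t * h $ j)) (at x within V)"
    and cont_f: "\<And>x. x \<in> V \<Longrightarrow> continuous_on (cbox a b) (f x)"
    and cont_F: "\<And>j. continuous_on (V \<times> cbox a b) (\<lambda>(x, t). F j x t)"
    and "x0 \<in> V" "convex V"
  shows "((\<lambda>x. integral (cbox a b) (f x)) has_derivative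
           (\<lambda>h. \<Sum>j\<in>UNIV. integral (cbox a b) (F j x0) * h $ j)) (at x0 within V)"
proof -
  define B where "B j = blinfun_inner_left (axis j (1::real))" for j :: 'n
  define Fx where "Fx x t = (\<Sum>j\<in>UNIV. F j x t *\<^sub>R B j)" for x t
  have B_apply: "blinfun_apply (B j) h = h $ j" for j h
    by (simp add: B_def inner_axis)
  have sum_B_apply: "blinfun_apply (\<Sum>j\<in>UNIV. c j *\<^sub>R B j) = (\<lambda>h. \<Sum>j\<in>UNIV. c j * h $ j)" for c
    by (rule ext) (simp add: blinfun.bilinear_simps B_apply)
  have cont_F': "continuous_on (V \<times> cbox a b) (\<lambda>z. F j (fst z) (snd z))" for j
    using cont_F[of j] by (simp add: case_prod_beta)
  have cont_F0: "continuous_on (cbox a b) (F j x0)" for j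
  proof -
    have "continuous_on (cbox a b) (\<lambda>t. (x0, t))" by (intro continuous_intros)
    moreover have "(\<lambda>t. (x0, t)) ` cbox a b \<subseteq> V \<times> cbox a b" using \<open>x0 \<in> V\<close> by auto
    ultimately show ?thesis using continuous_on_compose2[OF cont_F'[of j]] by fastforce
  qed
  have "((\<lambda>x. integral (cbox a b) (f x)) has_derivative blinfun_apply (integral (cbox a b) (Fx x0)))
      (at x0 within V)"
  proof (rule leibniz_rule)
    show "((\<lambda>x. f x t) has_derivative blinfun_apply (Fx x t)) (at x within V)"
      if "x \<in> V" "t \<in> cbox a b" for x t
      using deriv[OF that] by (simp add: Fx_def sum_B_apply)
    show "continuous_on (V \<times> cbox a b) (\<lambda>(x, t). Fx x t)"
      unfolding Fx_def case_prod_beta by (intro continuous_intros cont_F')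
    show "f x integrable_on cbox a b" if "x \<in> V" for x
      using cont_f[OF that] by (rule integrable_continuous)
  qed (use assms in auto)
  moreover have "integral (cbox a b) (Fx x0) = (\<Sum>j\<in>UNIV. integral (cbox a b) (F j x0) *\<^sub>R B j)"
  proof -
    have "(Fx x0 has_integral (\<Sum>j\<in>UNIV. integral (cbox a b) (F j x0) *\<^sub>R B j)) (cbox a b)"
      unfolding Fx_def
      by (intro has_integral_sum finite has_integral_scaleR_left integrable_integral
          integrable_continuous cont_F0)
    then show ?thesis by (rule integral_unique)
  qed
  ultimately show ?thesis by (simp add: sum_B_apply)
qed

definition radial_potential :: "real^'n \<Rightarrow> ('n \<Rightarrow> real^'n \<Rightarrow> real) \<Rightarrow> real^'n \<Rightarrow> real" where
  "radial_potential a w x = integral (cbox 0 1) (\<lambda>t. \<Sum>i\<in>UNIV. w i (a + t *\<^sub>R (x - a)) * (x - a) $ i)"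

lemma ray_in_ball:
  fixes a x :: "'a::real_normed_vector"
  assumes "x \<in> ball a r" "t \<in> cbox 0 1"
  shows "a + t *\<^sub>R (x - a) \<in> ball a r"
proof -
  have "dist a (a + t *\<^sub>R (x - a)) = \<bar>t\<bar> * norm (x - a)" by (simp add: dist_norm)
  also have "\<dots> \<le> norm (x - a)" using assms(2) by (simp add: mult_left_le_one_le)
  also have "\<dots> < r" using assms(1) by (simp add: dist_norm norm_minus_commute)
  finally show ?thesis by simp
qed

text \<open>By the symmetry of D the integrand is the t-derivative of t w_j(a + t (x - a)).\<close>

lemma integral_radial_derivative:
  fixes w :: "'n \<Rightarrow> real^'n \<Rightarrow> real"
  assumes dw: "\<And>i y. y \<in> ball a r \<Longrightarrow> (w i has_derivative (\<lambda>h. \<Sum>j\<in>UNIV. D i j y * h $ j)) (at y)"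
    and sym: "\<And>i j y. y \<in> ball a r \<Longrightarrow> D i j y = D j i y"
    and x: "x \<in> ball a r"
  shows "integral (cbox 0 1)
           (\<lambda>t. (\<Sum>i\<in>UNIV. t * D i j (a + t *\<^sub>R (x - a)) * (x - a) $ i) + w j (a + t *\<^sub>R (x - a)))
         = w j x"
proof -
  let ?p = "\<lambda>t. a + t *\<^sub>R (x - a)"
  have "((\<lambda>t. t * w j (?p t)) has_vector_derivative
          (\<Sum>i\<in>UNIV. t * D i j (?p t) * (x - a) $ i) + w j (?p t)) (at t within {0..1})"
    if t: "t \<in> {0..1}" for t
  proof -
    have p: "?p t \<in> ball a r" using ray_in_ball x t by simp
    have "(?p has_derivative (\<lambda>s. s *\<^sub>R (x - a))) (at t within {0..1})"
      by (auto intro!: derivative_eq_intros)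
    from has_derivative_compose[OF this dw[OF p, of j]]
    have "((\<lambda>t. w j (?p t)) has_derivative (\<lambda>s. \<Sum>k\<in>UNIV. D j k (?p t) * (s *\<^sub>R (x - a)) $ k))
        (at t within {0..1})" by simp
    then have "((\<lambda>t. t * w j (?p t)) has_derivative
        (\<lambda>s. t * (\<Sum>k\<in>UNIV. D j k (?p t) * (s *\<^sub>R (x - a)) $ k) + s * w j (?p t))) (at t within {0..1})"
      by (intro has_derivative_mult derivative_intros)
    moreover have "(\<lambda>s. t * (\<Sum>k\<in>UNIV. D j k (?p t) * (s *\<^sub>R (x - a)) $ k) + s * w j (?p t))
        = (\<lambda>s. s * ((\<Sum>i\<in>UNIV. t * D i j (?p t) * (x - a) $ i) + w j (?p t)))"
      using sym[OF p] by (auto simp: sum_distrib_left algebra_simps intro!: sum.cong)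
    ultimately show ?thesis by (simp add: has_vector_derivative_def)
  qed
  from fundamental_theorem_of_calculus[OF _ this]
  have "((\<lambda>t. (\<Sum>i\<in>UNIV. t * D i j (?p t) * (x - a) $ i) + w j (?p t)) has_integral w j x) {0..1}"
    by simp
  then show ?thesis by (simp add: integral_unique)
qed

lemma has_derivative_radial_integrand:
  fixes w :: "'n \<Rightarrow> real^'n \<Rightarrow> real"
  assumes dw: "\<And>i. (w i has_derivative (\<lambda>h. \<Sum>j\<in>UNIV. D i j (a + t *\<^sub>R (x - a)) * h $ j))
                       (at (a + t *\<^sub>R (x - a)))"
  shows "((\<lambda>x. \<Sum>i\<in>UNIV. w i (a + t *\<^sub>R (x - a)) * (x - a) $ i) has_derivative
           (\<lambda>h. \<Sum>j\<in>UNIV. ((\<Sum>i\<in>UNIV. t * D i j (a + t *\<^sub>R (x - a)) * (x - a) $ i)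
                              + w j (a + t *\<^sub>R (x - a))) * h $ j)) (at x)"
proof -
  let ?q = "a + t *\<^sub>R (x - a)"
  have "((\<lambda>x. a + t *\<^sub>R (x - a)) has_derivative (\<lambda>h. t *\<^sub>R h)) (at x)"
    by (auto intro!: derivative_eq_intros)
  from has_derivative_compose[OF this dw]
  have dwi: "((\<lambda>x. w i (a + t *\<^sub>R (x - a))) has_derivative
      (\<lambda>h. \<Sum>j\<in>UNIV. D i j ?q * (t *\<^sub>R h) $ j)) (at x)" for i
    by simp
  have dn: "((\<lambda>x. (x - a) $ i) has_derivative (\<lambda>h. h $ i)) (at x)" for i
  proof -
    have "((\<lambda>x. x - a) has_derivative (\<lambda>h. h)) (at x)"
      by (auto intro!: derivative_eq_intros)
    from bounded_linear.has_derivative[OF bounded_linear_vec_nth[of i] this] show ?thesis .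
  qed
  have "((\<lambda>x. \<Sum>i\<in>UNIV. w i (a + t *\<^sub>R (x - a)) * (x - a) $ i) has_derivative
      (\<lambda>h. \<Sum>i\<in>UNIV. w i ?q * h $ i + (\<Sum>j\<in>UNIV. D i j ?q * (t *\<^sub>R h) $ j) * (x - a) $ i)) (at x)"
    by (intro has_derivative_sum has_derivative_mult dwi dn)
  moreover have "(\<Sum>i\<in>UNIV. w i ?q * h $ i + (\<Sum>j\<in>UNIV. D i j ?q * (t *\<^sub>R h) $ j) * (x - a) $ i)
      = (\<Sum>j\<in>UNIV. ((\<Sum>i\<in>UNIV. t * D i j ?q * (x - a) $ i) + w j ?q) * h $ j)" for h
  proof -
    have "(\<Sum>i\<in>UNIV. w i ?q * h $ i + (\<Sum>j\<in>UNIV. D i j ?q * (t *\<^sub>R h) $ j) * (x - a) $ i)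
        = (\<Sum>i\<in>UNIV. w i ?q * h $ i) + (\<Sum>i\<in>UNIV. \<Sum>j\<in>UNIV. t * D i j ?q * (x - a) $ i * h $ j)"
      by (simp add: sum.distrib sum_distrib_left sum_distrib_right mult_ac del: vector_minus_component)
    also have "\<dots> = (\<Sum>i\<in>UNIV. w i ?q * h $ i) + (\<Sum>j\<in>UNIV. \<Sum>i\<in>UNIV. t * D i j ?q * (x - a) $ i * h $ j)"
      by (subst sum.swap) rule
    also have "\<dots> = (\<Sum>j\<in>UNIV. ((\<Sum>i\<in>UNIV. t * D i j ?q * (x - a) $ i) + w j ?q) * h $ j)"
      by (simp add: sum.distrib sum_distrib_left sum_distrib_right distrib_left distrib_right
          mult_ac add.commute del: vector_minus_component)
    finally show ?thesis .
  qed
  ultimately show ?thesis by simp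
qed

lemma has_derivative_radial_potential:
  fixes w :: "'n \<Rightarrow> real^'n \<Rightarrow> real"
  assumes dw: "\<And>i y. y \<in> ball a r \<Longrightarrow> (w i has_derivative (\<lambda>h. \<Sum>j\<in>UNIV. D i j y * h $ j)) (at y)"
    and cont_D: "\<And>i j. continuous_on (ball a r) (D i j)"
    and sym: "\<And>i j y. y \<in> ball a r \<Longrightarrow> D i j y = D j i y"
    and x: "x \<in> ball a r"
  shows "(radial_potential a w has_derivative (\<lambda>h. \<Sum>j\<in>UNIV. w j x * h $ j)) (at x)"
proof -
  let ?V = "ball a r \<times> cbox (0::real) 1"
  let ?p = "\<lambda>z. a + snd z *\<^sub>R (fst z - a)"
  have cont_w: "continuous_on (ball a r) (w i)" for i
    using dw by (meson continuous_at_imp_continuous_on has_derivative_continuous)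
  have cont_p: "continuous_on ?V ?p"
    by (intro continuous_intros)
  have "?p z \<in> ball a r" if "z \<in> ?V" for z
    using that ray_in_ball[of "fst z" a r "snd z"] by (simp add: mem_Times_iff)
  then have p_ball: "?p ` ?V \<subseteq> ball a r"
    by blast
  have "continuous_on ?V (\<lambda>z. D i j (?p z))" "continuous_on ?V (\<lambda>z. w i (?p z))" for i j
    using continuous_on_compose2[OF cont_D cont_p p_ball] continuous_on_compose2[OF cont_w cont_p p_ball]
    by auto
  then have cont_integrand: "continuous_on ?V (\<lambda>(y, t).
      (\<Sum>i\<in>UNIV. t * D i j (a + t *\<^sub>R (y - a)) * (y - a) $ i) + w j (a + t *\<^sub>R (y - a)))" for j
    unfolding case_prod_beta by (intro continuous_intros) auto
  have cont_integrand_potential: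
    "continuous_on (cbox 0 1) (\<lambda>t. \<Sum>i\<in>UNIV. w i (a + t *\<^sub>R (y - a)) * (y - a) $ i)"
    if "y \<in> ball a r" for y
  proof -
    have "(\<lambda>t. a + t *\<^sub>R (y - a)) ` cbox 0 1 \<subseteq> ball a r"
      using ray_in_ball[OF that] by blast
    then have "continuous_on (cbox 0 1) (\<lambda>t. w i (a + t *\<^sub>R (y - a)))" for i
      by (intro continuous_on_compose2[OF cont_w] continuous_intros)
    then show ?thesis by (intro continuous_intros)
  qed
  have "(radial_potential a w has_derivative
      (\<lambda>h. \<Sum>j\<in>UNIV. integral (cbox 0 1) (\<lambda>t. (\<Sum>i\<in>UNIV. t * D i j (a + t *\<^sub>R (x - a)) * (x - a) $ i)
                                               + w j (a + t *\<^sub>R (x - a))) * h $ j)) (at x within ball a r)"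
    unfolding radial_potential_def
  proof (rule leibniz_rule_partials[OF _ cont_integrand_potential cont_integrand x convex_ball])
    fix y and t :: real
    assume "y \<in> ball a r" "t \<in> cbox 0 1"
    then have "a + t *\<^sub>R (y - a) \<in> ball a r" by (rule ray_in_ball)
    then have "(w i has_derivative (\<lambda>h. \<Sum>j\<in>UNIV. D i j (a + t *\<^sub>R (y - a)) * h $ j))
        (at (a + t *\<^sub>R (y - a)))" for i
      by (rule dw)
    then show "((\<lambda>y. \<Sum>i\<in>UNIV. w i (a + t *\<^sub>R (y - a)) * (y - a) $ i) has_derivative
        (\<lambda>h. \<Sum>j\<in>UNIV. ((\<Sum>i\<in>UNIV. t * D i j (a + t *\<^sub>R (y - a)) * (y - a) $ i)
                          + w j (a + t *\<^sub>R (y - a))) * h $ j)) (at y within ball a r)"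
      by (rule has_derivative_at_withinI[OF has_derivative_radial_integrand])
  qed
  then show ?thesis
    by (simp only: integral_radial_derivative[OF dw sym x] at_within_open[OF x open_ball])
qed

lemma smooth_local_potential:
  fixes w :: "'n \<Rightarrow> real^'n \<Rightarrow> real"
  assumes "open U" "x \<in> U"
    and smooth: "\<And>i. smooth_on U (w i)"
    and sym: "\<And>i j y. y \<in> U \<Longrightarrow> partial (w i) j y = partial (w j) i y"
  obtains V u where "open V" "x \<in> V" "V \<subseteq> U" "smooth_on V u"
    "\<And>i y. y \<in> V \<Longrightarrow> partial u i y = w i y"
proof -
  obtain r where r: "r > 0" "ball x r \<subseteq> U"
    using assms(1,2) open_contains_ball by blast
  have du: "(radial_potential x w has_derivative (\<lambda>h. \<Sum>j\<in>UNIV. w j y * h $ j)) (at y)"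
    if "y \<in> ball x r" for y
  proof (rule has_derivative_radial_potential[OF _ _ _ that])
    show "(w i has_derivative (\<lambda>h. \<Sum>j\<in>UNIV. partial (w i) j y * h $ j)) (at y)"
      if "y \<in> ball x r" for i y
      using that r(2) assms(1) smooth by (blast intro: has_derivative_sum_partials smooth_on_imp_differentiable_at)
    show "continuous_on (ball x r) (partial (w i) j)" for i j
      using smooth_on_subset[OF smooth_on_partial[OF smooth] r(2)]
      by (blast intro: differentiable_imp_continuous_on smooth_on_imp_differentiable_on)
  qed (use sym r(2) in blast)
  have partial_eq: "partial (radial_potential x w) i y = w i y" if "y \<in> ball x r" for i y
    using partial_eq_derivative_axis[OF du[OF that]] by (simp add: sum_mult_axis_nth)
  have "smooth_on (ball x r) (radial_potential x w)"
  proof (rule smooth_on_if_partials_smooth)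
    have "radial_potential x w differentiable (at y)" if "y \<in> ball x r" for y
      using du[OF that] by (rule differentiableI)
    then show "radial_potential x w differentiable_on ball x r"
      by (simp add: differentiable_on_eq_differentiable_at)
    show "smooth_on (ball x r) (partial (radial_potential x w) i)" for i
      by (rule smooth_on_cong_open[OF open_ball smooth_on_subset[OF smooth r(2)]])
        (simp add: partial_eq)
  qed
  then show thesis
    using that[OF open_ball _ r(2) _ partial_eq] r(1) by simp
qed

section \<open>The Gibbons-Tsarev system\<close>

locale gibbons_tsarev_system =
  fixes b q :: "real^'n \<Rightarrow> real" and lam mu gam :: "'n \<Rightarrow> real^'n \<Rightarrow> real"
    and U :: "(real^'n) set"
  assumes open_U: "open U"
    and smooth_b: "smooth_on U b" and smooth_mu: "\<And>i. smooth_on U (mu i)"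
    and differentiable_q: "q differentiable_on U"
    and differentiable_lam: "\<And>i. lam i differentiable_on U"
    and differentiable_gam: "\<And>i. gam i differentiable_on U"
    and mu_nonzero: "\<And>i x. x \<in> U \<Longrightarrow> mu i x \<noteq> 0"
    and partial_q: "\<And>i x. x \<in> U \<Longrightarrow> partial q i x = lam i x / mu i x * partial b i x"
    and Ecoef_nonzero: "\<And>i j x. i \<noteq> j \<Longrightarrow> x \<in> U \<Longrightarrow> Ecoef b q lam mu gam i j x \<noteq> 0"
    and partial_lam: "\<And>i j x. i \<noteq> j \<Longrightarrow> x \<in> U \<Longrightarrow>
      partial (lam i) j x = (lam j x - lam i x) * Kcoef b q lam mu gam i j x"
    and partial_mu: "\<And>i j x. i \<noteq> j \<Longrightarrow> x \<in> U \<Longrightarrow>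
      partial (mu i) j x = (mu j x - mu i x) * Kcoef b q lam mu gam i j x"
    and partial_gam: "\<And>i j x. i \<noteq> j \<Longrightarrow> x \<in> U \<Longrightarrow>
      partial (gam i) j x = (gam j x - gam i x) * Kcoef b q lam mu gam i j x"
    and partial_partial_b: "\<And>i j x. i \<noteq> j \<Longrightarrow> x \<in> U \<Longrightarrow>
      partial (partial b i) j x =
        (lam i x * (1 + mu j x / mu i x) - lam j x * (1 + mu i x / mu j x))
          / Ecoef b q lam mu gam i j x * partial b i x * partial b j x"
begin

abbreviation E :: "'n \<Rightarrow> 'n \<Rightarrow> real^'n \<Rightarrow> real" where
  "E \<equiv> Ecoef b q lam mu gam"

definition c :: "'n \<Rightarrow> real^'n \<Rightarrow> real" where
  "c i x = gam i x + b x * lam i x - q x * mu i x"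

definition phi :: "'n \<Rightarrow> real^'n \<Rightarrow> real" where
  "phi i x = lam i x / mu i x"

definition w :: "'n \<Rightarrow> real^'n \<Rightarrow> real" where
  "w i x = mu i x * partial b i x"

lemma differentiable_at_data:
  assumes "x \<in> U"
  shows "b differentiable (at x)" "q differentiable (at x)" "lam i differentiable (at x)"
    "mu i differentiable (at x)" "gam i differentiable (at x)" "partial b i differentiable (at x)"
  using assms open_U smooth_on_partial[OF smooth_b] smooth_b smooth_mu
    differentiable_q differentiable_lam differentiable_gam
  by (auto simp: differentiable_on_eq_differentiable_at intro: smooth_on_imp_differentiable_at)

lemma Ecoef_eq_c_diff: "E i j x = c i x - c j x"
  by (simp add: Ecoef_def c_def algebra_simps)

lemma Kcoef_mult_Ecoef:
  "i \<noteq> j \<Longrightarrow> x \<in> U \<Longrightarrow>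
    Kcoef b q lam mu gam i j x * E i j x = (lam i x - lam j x * mu i x / mu j x) * partial b j x"
  by (simp add: Kcoef_def Ecoef_nonzero)

lemma partial_c_off_diagonal:
  assumes "i \<noteq> j" "x \<in> U"
  shows "partial (c i) j x = 0"
proof -
  note d = differentiable_at_data[OF assms(2)]
  let ?K = "Kcoef b q lam mu gam i j x"
  have "(c i has_derivative (\<lambda>h. (\<Sum>k\<in>UNIV. partial (gam i) k x * h $ k)
      + (b x * (\<Sum>k\<in>UNIV. partial (lam i) k x * h $ k) + (\<Sum>k\<in>UNIV. partial b k x * h $ k) * lam i x)
      - (q x * (\<Sum>k\<in>UNIV. partial (mu i) k x * h $ k) + (\<Sum>k\<in>UNIV. partial q k x * h $ k) * mu i x)))
      (at x)"
    unfolding c_def[abs_def]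
    by (intro has_derivative_diff has_derivative_add has_derivative_mult has_derivative_sum_partials d)
  then have "partial (c i) j x = partial (gam i) j x + b x * partial (lam i) j x + partial b j x * lam i x
      - q x * partial (mu i) j x - partial q j x * mu i x"
    by (simp add: partial_eq_derivative_axis sum_mult_axis_nth)
  also have "\<dots> = (lam i x - lam j x * mu i x / mu j x) * partial b j x - ?K * E i j x"
    using assms by (simp add: partial_gam partial_lam partial_mu partial_q Ecoef_def algebra_simps)
  also have "\<dots> = 0"
    using Kcoef_mult_Ecoef[OF assms] by simp
  finally show ?thesis .
qed

lemma Ecoef_swap: "E j i x = - E i j x"
  by (simp add: Ecoef_eq_c_diff)

lemma partial_w_off_diagonal:
  assumes "i \<noteq> j" "y \<in> U"
  shows "partial (w i) j y
    = 2 * mu i y * mu j y * (phi i y - phi j y) / E i j y * partial b i y * partial b j y"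
proof -
  have "partial (w i) j y = partial (mu i) j y * partial b i y + mu i y * partial (partial b i) j y"
    unfolding w_def[abs_def] by (rule partial_mult[OF differentiable_at_data(4,6)[OF assms(2)]])
  also have "\<dots> = (mu j y - mu i y) * Kcoef b q lam mu gam i j y * partial b i y
      + mu i y * ((lam i y * (1 + mu j y / mu i y) - lam j y * (1 + mu i y / mu j y))
                  / E i j y * partial b i y * partial b j y)"
    using assms by (simp add: partial_mu partial_partial_b)
  also have "\<dots> = 2 * mu i y * mu j y * (phi i y - phi j y) / E i j y * partial b i y * partial b j y"
    using mu_nonzero[OF assms(2)] Ecoef_nonzero[OF assms]
    by (simp add: Kcoef_def phi_def field_simps)
  finally show ?thesis .
qed

lemma partial_w_sym:
  assumes "y \<in> U"
  shows "partial (w i) j y = partial (w j) i y"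
proof (cases "i = j")
  case False
  have "partial (w i) j y
      = 2 * mu i y * mu j y * (phi i y - phi j y) / E i j y * partial b i y * partial b j y"
    by (rule partial_w_off_diagonal[OF False assms])
  also have "\<dots> = 2 * mu j y * mu i y * (phi j y - phi i y) / E j i y * partial b j y * partial b i y"
    by (simp add: Ecoef_swap[of i j] divide_simps algebra_simps)
  also have "\<dots> = partial (w j) i y"
    by (rule partial_w_off_diagonal[OF not_sym[OF False] assms, symmetric])
  finally show ?thesis .
qed simp

lemma smooth_w: "smooth_on U (w i)"
  unfolding w_def[abs_def] by (intro smooth_on_mult open_U smooth_mu smooth_on_partial smooth_b)

lemma partial_phi_off_diagonal:
  assumes "i \<noteq> j" "y \<in> U"
  shows "partial (phi i) j y = (phi j y - phi i y)^2 / (c j y - c i y) * w j y"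
proof -
  let ?K = "Kcoef b q lam mu gam i j y"
  have "partial (phi i) j y = (partial (lam i) j y * mu i y - lam i y * partial (mu i) j y) / (mu i y)^2"
    unfolding phi_def[abs_def]
    by (rule partial_divide[OF differentiable_at_data(3,4)[OF assms(2)] mu_nonzero[OF assms(2)]])
  also have "\<dots> = ((lam j y - lam i y) * ?K * mu i y - lam i y * ((mu j y - mu i y) * ?K)) / (mu i y)^2"
    using assms by (simp add: partial_lam partial_mu)
  also have "\<dots> = (phi j y - phi i y)^2 / (- E i j y) * w j y"
    using mu_nonzero[OF assms(2)] Ecoef_nonzero[OF assms]
    by (simp add: Kcoef_def phi_def w_def field_simps power2_eq_square)
  also have "\<dots> = (phi j y - phi i y)^2 / (c j y - c i y) * w j y"
    by (simp add: Ecoef_eq_c_diff)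
  finally show ?thesis .
qed

lemma partial_partial_potential:
  assumes "open V" "V \<subseteq> U" and potential: "\<And>i y. y \<in> V \<Longrightarrow> partial u i y = w i y"
    and "i \<noteq> j" "y \<in> V"
  shows "partial (partial u i) j y = 2 * (phi j y - phi i y) / (c j y - c i y) * partial u i y * partial u j y"
proof -
  have y: "y \<in> U" using assms(2,5) by blast
  have "partial (partial u i) j y = partial (w i) j y"
    using assms(1,5) potential by (rule partial_cong_open)
  also have "\<dots> = 2 * (phi j y - phi i y) / (- E i j y) * w i y * w j y"
    using partial_w_off_diagonal[OF assms(4) y] Ecoef_nonzero[OF assms(4) y]
    by (simp add: w_def field_simps)
  also have "\<dots> = 2 * (phi j y - phi i y) / (c j y - c i y) * partial u i y * partial u j y"
    by (simp add: Ecoef_eq_c_diff potential assms(5))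
  finally show ?thesis .
qed

lemma exists_local_potential:
  assumes x: "x \<in> U"
  shows "\<exists>V u. open V \<and> x \<in> V \<and> V \<subseteq> U \<and> smooth_on V u
    \<and> (\<forall>i. \<forall>y\<in>V. partial u i y = mu i y * partial b i y)
    \<and> (\<forall>i j. i \<noteq> j \<longrightarrow> (\<forall>y\<in>V.
         partial (phi i) j y = (phi j y - phi i y)^2 / (c j y - c i y) * partial u j y
       \<and> partial (partial u i) j y
           = 2 * (phi j y - phi i y) / (c j y - c i y) * partial u i y * partial u j y))"
proof -
  obtain V u where V: "open V" "x \<in> V" "V \<subseteq> U" "smooth_on V u"
    and u: "\<And>i y. y \<in> V \<Longrightarrow> partial u i y = w i y"
    using smooth_local_potential[OF open_U x smooth_w partial_w_sym] by blast
  have "\<forall>i. \<forall>y\<in>V. partial u i y = mu i y * partial b i y"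
    using u by (simp add: w_def)
  moreover have "\<forall>i j. i \<noteq> j \<longrightarrow> (\<forall>y\<in>V.
         partial (phi i) j y = (phi j y - phi i y)^2 / (c j y - c i y) * partial u j y
       \<and> partial (partial u i) j y
           = 2 * (phi j y - phi i y) / (c j y - c i y) * partial u i y * partial u j y)"
  proof (intro allI impI ballI conjI)
    fix i j :: 'n and y
    assume ij: "i \<noteq> j" and y: "y \<in> V"
    have "y \<in> U" using V(3) y by blast
    then show "partial (phi i) j y = (phi j y - phi i y)^2 / (c j y - c i y) * partial u j y"
      by (simp only: u[OF y] partial_phi_off_diagonal[OF ij])
    show "partial (partial u i) j y
        = 2 * (phi j y - phi i y) / (c j y - c i y) * partial u i y * partial u j y"
      by (rule partial_partial_potential[OF V(1,3) u ij y])
  qed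
  ultimately show ?thesis
    by (intro exI[of _ V] exI[of _ u] conjI V)
qed

end

theorem mainTheorem14:
  fixes b q :: "real^'n \<Rightarrow> real"
    and lam mu gam :: "'n \<Rightarrow> real^'n \<Rightarrow> real"
    and U :: "(real^'n) set"
  assumes U: "open U"
    and sb: "smooth_on U b" and sq: "smooth_on U q"
    and slam: "\<forall>i. smooth_on U (lam i)" and smu: "\<forall>i. smooth_on U (mu i)"
    and sgam: "\<forall>i. smooth_on U (gam i)"
    and mu_nz: "\<forall>i. \<forall>x\<in>U. mu i x \<noteq> 0"
    and hq: "\<forall>i. \<forall>x\<in>U. partial q i x = lam i x / mu i x * partial b i x"
    and E_nz: "\<forall>i j. i \<noteq> j \<longrightarrow> (\<forall>x\<in>U. Ecoef b q lam mu gam i j x \<noteq> 0)"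
    and hlam: "\<forall>i j. i \<noteq> j \<longrightarrow> (\<forall>x\<in>U.
                 partial (lam i) j x = (lam j x - lam i x) * Kcoef b q lam mu gam i j x)"
    and hmu: "\<forall>i j. i \<noteq> j \<longrightarrow> (\<forall>x\<in>U.
                 partial (mu i) j x = (mu j x - mu i x) * Kcoef b q lam mu gam i j x)"
    and hgam: "\<forall>i j. i \<noteq> j \<longrightarrow> (\<forall>x\<in>U.
                 partial (gam i) j x = (gam j x - gam i x) * Kcoef b q lam mu gam i j x)"
    and hb: "\<forall>i j. i \<noteq> j \<longrightarrow> (\<forall>x\<in>U.
                 partial (partial b i) j x =
                   (lam i x * (1 + mu j x / mu i x) - lam j x * (1 + mu i x / mu j x))
                     / Ecoef b q lam mu gam i j x * partial b i x * partial b j x)"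
  shows "let c = (\<lambda>i x. gam i x + b x * lam i x - q x * mu i x);
             phi = (\<lambda>i x. lam i x / mu i x)
         in (\<forall>i j. i \<noteq> j \<longrightarrow> (\<forall>x\<in>U. partial (c i) j x = 0))
          \<and> (\<forall>i j. i \<noteq> j \<longrightarrow> (\<forall>x\<in>U. Ecoef b q lam mu gam i j x = c i x - c j x))
          \<and> (\<forall>x\<in>U. \<exists>V u. open V \<and> x \<in> V \<and> V \<subseteq> U \<and> smooth_on V u
                 \<and> (\<forall>i. \<forall>y\<in>V. partial u i y = mu i y * partial b i y)
                 \<and> (\<forall>i j. i \<noteq> j \<longrightarrow> (\<forall>y\<in>V.
                      partial (phi i) j y = (phi j y - phi i y)^2 / (c j y - c i y) * partial u j y
                    \<and> partial (partial u i) j y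
                        = 2 * (phi j y - phi i y) / (c j y - c i y) * partial u i y * partial u j y)))"
proof -
  interpret gibbons_tsarev_system b q lam mu gam U
    using assms by unfold_locales (auto simp: smooth_on_imp_differentiable_on)
  have "(\<forall>i j. i \<noteq> j \<longrightarrow> (\<forall>x\<in>U. partial (c i) j x = 0))
      \<and> (\<forall>i j. i \<noteq> j \<longrightarrow> (\<forall>x\<in>U. E i j x = c i x - c j x))
      \<and> (\<forall>x\<in>U. \<exists>V u. open V \<and> x \<in> V \<and> V \<subseteq> U \<and> smooth_on V u
          \<and> (\<forall>i. \<forall>y\<in>V. partial u i y = mu i y * partial b i y)
          \<and> (\<forall>i j. i \<noteq> j \<longrightarrow> (\<forall>y\<in>V.
               partial (phi i) j y = (phi j y - phi i y)^2 / (c j y - c i y) * partial u j y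
             \<and> partial (partial u i) j y
                 = 2 * (phi j y - phi i y) / (c j y - c i y) * partial u i y * partial u j y)))"
    by (intro conjI allI impI ballI partial_c_off_diagonal Ecoef_eq_c_diff exists_local_potential)
  then show ?thesis
    unfolding Let_def c_def[abs_def] phi_def[abs_def] .
qed

end
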